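(* Let $X,Y$ be real Banach spaces with a bilinear map $\langle\cdot,\cdot\rangle\colon X\times Y\to\mathbb{R}$ and normalized sequences $(e_j)\subset X$, $(f_j)\subset Y$ satisfying (B1)–(B5) below. Let $T\colon X\to X$ be a bounded linear operator with $\delta:=\inf_j\langle Te_j,f_j\rangle>0$. Let $L\in2\mathbb{N}$, $N\in\mathbb{N}$ with $N\ge L$, and let $\mathcal{A}\subset\mathbb{N}$ with $|\mathcal{A}|=N$. Then $$\frac{1}{|\Omega_L^{\mathcal{A}}|}\sum_{(\mathcal{B},(\varepsilon_k))\in\Omega_L^{\mathcal{A}}}\bigl\langle Tb_{\mathcal{B}}^{(\varepsilon_k)},d_{\mathcal{B}}^{(\varepsilon_k)}\bigr\rangle\ \ge\ \Bigl[\delta-C_d\frac{\|T\|}{N-1}\nu(N)\Bigr]\cdot L.$$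
   Context: Standing assumptions: (B1) if $\langle x,y\rangle=0$ for all $y\in Y$ then $x=0$; (B2) if $\langle x,y\rangle=0$ for all $x\in X$ then $y=0$; (B3) there is $C_d>0$ with $|\langle x,y\rangle|\le C_d\|x\|\|y\|$; (B4) $\langle e_j,f_k\rangle=1$ if $j=k$ and $0$ otherwise; (B5) every $x\in X$ has the unique representation $x=\sum_j\langle x,f_j\rangle e_j$ converging in $\sigma(X,Y)$, the topology generated by the seminorms $x\mapsto|\langle x,y\rangle|$, $y\in Y$. For finite $\mathcal{B}$, $\mathcal{E}(\mathcal{B})=\{(\varepsilon_k)\in\{\pm1\}^{\mathcal{B}}:\sum_{k\in\mathcal{B}}\varepsilon_k=0\}$. For $\mathcal{A}$ finite with $|\mathcal{A}|\ge L$, $\Omega_L^{\mathcal{A}}=\{(\mathcal{B},(\varepsilon_k)):\mathcal{B}\subset\mathcal{A},\ |\mathcal{B}|=L,\ (\varepsilon_k)\in\mathcal{E}(\mathcal{B})\}$, and $b_{\mathcal{B}}^{(\varepsilon_k)}=\sum_{k\in\mathcal{B}}\varepsilon_ke_k$, $d_{\mathcal{B}}^{(\varepsilon_k)}=\sum_{k\in\mathcal{B}}\varepsilon_kf_k$. The function $\nu\colon\mathbb{N}\to[0,\infty]$ is $$\nu(n)=\sup\Bigl\{\min\Bigl(\max_{l\in\mathcal{A}}\Bigl\|\sum_{k\in\mathcal{A}\setminus\{l\}}e_k\Bigr\|_X,\ \max_{k\in\mathcal{A}}\Bigl\|\sum_{l\in\mathcal{A}\setminus\{k\}}f_l\Bigr\|_Y\Bigr):\mathcal{A}\subset\mathbb{N},\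 |\mathcal{A}|=n\Bigr\}.$$ *)

theory Defs
  imports "HOL-Analysis.Analysis"
begin

definition signs_E :: "nat set \<Rightarrow> (nat \<Rightarrow> real) set" where
  "signs_E B = {\<epsilon>. (\<forall>k\<in>B. \<epsilon> k = 1 \<or> \<epsilon> k = -1) \<and> (\<forall>k. k \<notin> B \<longrightarrow> \<epsilon> k = 0)
                   \<and> (\<Sum>k\<in>B. \<epsilon> k) = 0}"

definition Omega :: "nat \<Rightarrow> nat set \<Rightarrow> (nat set \<times> (nat \<Rightarrow> real)) set" where
  "Omega L A = {(B, \<epsilon>). B \<subseteq> A \<and> card B = L \<and> \<epsilon> \<in> signs_E B}"

definition bvec :: "(nat \<Rightarrow> 'a::real_vector) \<Rightarrow> nat set \<Rightarrow> (nat \<Rightarrow> real) \<Rightarrow> 'a" where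
  "bvec e B \<epsilon> = (\<Sum>k\<in>B. \<epsilon> k *\<^sub>R e k)"

definition nu :: "(nat \<Rightarrow> 'x::real_normed_vector) \<Rightarrow> (nat \<Rightarrow> 'y::real_normed_vector) \<Rightarrow> nat \<Rightarrow> ereal" where
  "nu e f n = (SUP A \<in> {A. finite A \<and> card A = n}.
      ereal (min (Max ((\<lambda>l. norm (\<Sum>k\<in>A - {l}. e k)) ` A))
                 (Max ((\<lambda>k. norm (\<Sum>l\<in>A - {k}. f l)) ` A))))"

end

theory Submission
  imports Defs
begin

(* Expanding the pairing, the average over Omega of <T b, d> is the quadratic form
   sum_{j,k in A} <T e_j, f_k> W_jk / |Omega| with the sign correlations
   W_jk = sum_Omega eps_j eps_k.  Omega is invariant under permutations of A, so all off-diagonal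
   entries of W are equal; every sign pattern sums to zero, so the rows of W sum to zero; and the
   trace of W is L |Omega|.  Hence the average is
   (L/N) sum_j <T e_j, f_j> - L/(N(N-1)) sum_{j <> k} <T e_j, f_k>.
   The diagonal sum is at least N delta.  The off-diagonal sum is both
   sum_j <T e_j, sum_{k <> j} f_k> and sum_k <T (sum_{j <> k} e_j), f_k>, so by (B3) it is at most
   N C_d ||T|| times the smaller of the two maximal leave-one-out norms, which is at most nu(N). *)

lemma Omega_memD:
  assumes "(B, \<epsilon>) \<in> Omega L A"
  shows "B \<subseteq> A" "card B = L" "\<And>k. k \<in> B \<Longrightarrow> \<epsilon> k = 1 \<or> \<epsilon> k = -1"
    "\<And>k. k \<notin> B \<Longrightarrow> \<epsilon> k = 0" "(\<Sum>k\<in>B. \<epsilon> k) = 0"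
  using assms by (auto simp: Omega_def signs_E_def)

lemma Omega_finite:
  assumes "finite A"
  shows "finite (Omega L A)"
proof -
  let ?F = "(\<lambda>g k. if k \<in> A then g k else 0) ` (PiE A (\<lambda>_. {-1, 0, 1::real}))"
  have "Omega L A \<subseteq> Pow A \<times> ?F"
  proof clarify
    fix B \<epsilon> assume x: "(B, \<epsilon>) \<in> Omega L A"
    note mem = Omega_memD[OF x]
    have "\<epsilon> i \<in> {-1, 0, 1}" for i
      using mem(3,4) by (cases "i \<in> B") auto
    then have "restrict \<epsilon> A \<in> PiE A (\<lambda>_. {-1, 0, 1})" by auto
    moreover have "\<epsilon> = (\<lambda>k. if k \<in> A then restrict \<epsilon> A k else 0)"
      using mem(1,4) by (auto simp: fun_eq_iff)
    ultimately show "B \<in> Pow A \<and> \<epsilon> \<in> ?F" using mem(1) by blast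
  qed
  moreover have "finite (Pow A \<times> ?F)" using assms by (simp add: finite_PiE)
  ultimately show ?thesis by (rule finite_subset)
qed

lemma Omega_nonempty:
  assumes "finite A" "even L" "L \<le> card A"
  shows "Omega L A \<noteq> {}"
proof -
  obtain B where B: "B \<subseteq> A" "card B = L"
    using obtain_subset_with_card_n[OF assms(3)] by metis
  obtain C where C: "C \<subseteq> B" "card C = L div 2"
    using obtain_subset_with_card_n[of "L div 2" B] B(2) by auto
  have fin: "finite B" using B(1) assms(1) finite_subset by blast
  define \<epsilon> where "\<epsilon> k = (if k \<in> C then 1 else if k \<in> B then -1 else (0::real))" for k
  have "card (B - C) = card C"
    using C B(2) assms(2) fin by (auto simp: card_Diff_subset finite_subset elim!: evenE)
  then have "(\<Sum>k\<in>B. \<epsilon> k) = 0"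
    using fin C(1) by (simp add: \<epsilon>_def sum.If_cases Int_absorb1 Diff_eq[symmetric])
  then have "(B, \<epsilon>) \<in> Omega L A"
    using B C(1) by (auto simp: Omega_def signs_E_def \<epsilon>_def)
  then show ?thesis by auto
qed

lemma Omega_permute:
  assumes p: "p permutes A" and x: "(B, \<epsilon>) \<in> Omega L A"
  shows "(p ` B, \<epsilon> \<circ> inv p) \<in> Omega L A"
proof -
  note mem = Omega_memD[OF x]
  have inj: "inj p" using p by (rule permutes_inj)
  have "p ` B \<subseteq> A" using mem(1) p by (auto simp: permutes_in_image)
  moreover have "card (p ` B) = L" using mem(2) inj by (simp add: card_image inj_on_subset)
  moreover have "(\<Sum>k\<in>p ` B. (\<epsilon> \<circ> inv p) k) = 0"
    using mem(5) inj by (simp add: sum.reindex inj_on_subset permutes_inverses(2)[OF p])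
  moreover have "(\<epsilon> \<circ> inv p) k = 0" if "k \<notin> p ` B" for k
    using that mem(4) by (metis comp_apply image_eqI permutes_inverses(1)[OF p])
  ultimately show ?thesis
    using mem(3) by (auto simp: Omega_def signs_E_def permutes_inverses(2)[OF p])
qed

lemma sum_Omega_permute:
  assumes "p permutes A"
  shows "(\<Sum>x\<in>Omega L A. g x) = (\<Sum>(B, \<epsilon>)\<in>Omega L A. g (p ` B, \<epsilon> \<circ> inv p))"
proof (rule sum.reindex_bij_witness[where i="\<lambda>(B, \<epsilon>). (p ` B, \<epsilon> \<circ> inv p)"
      and j="\<lambda>(B, \<epsilon>). (inv p ` B, \<epsilon> \<circ> inv (inv p))"])
  have inv: "inv p permutes A" using assms by (rule permutes_inv)
  show "(\<lambda>(B, \<epsilon>). (inv p ` B, \<epsilon> \<circ> inv (inv p))) x \<in> Omega L A" if "x \<in> Omega L A" for x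
    using that Omega_permute[OF inv] by (cases x) auto
  show "(\<lambda>(B, \<epsilon>). (p ` B, \<epsilon> \<circ> inv p)) x \<in> Omega L A" if "x \<in> Omega L A" for x
    using that Omega_permute[OF assms] by (cases x) auto
qed (auto simp: image_comp comp_assoc permutes_inv_o[OF assms] permutes_inverses[OF assms]
    permutes_inv_inv[OF assms])

definition sign_corr :: "nat \<Rightarrow> nat set \<Rightarrow> nat \<Rightarrow> nat \<Rightarrow> real" where
  "sign_corr L A j k = (\<Sum>(B, \<epsilon>)\<in>Omega L A. \<epsilon> j * \<epsilon> k)"

lemma sign_corr_permute:
  assumes p: "p permutes A"
  shows "sign_corr L A (p j) (p k) = sign_corr L A j k"
  unfolding sign_corr_def
  by (subst sum_Omega_permute[OF p]) (simp add: case_prod_unfold permutes_inverses(2)[OF p])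

lemma sign_corr_offdiag_eq:
  assumes "j \<in> A" "k \<in> A" "j' \<in> A" "k' \<in> A" "j \<noteq> k" "j' \<noteq> k'"
  shows "sign_corr L A j k = sign_corr L A j' k'"
proof -
  define t where "t = Transposition.transpose j j'"
  have t: "t permutes A" "t j = j'" using assms by (simp_all add: t_def permutes_swap_id)
  define k1 where "k1 = t k"
  have "k1 \<in> A" using permutes_in_image[OF t(1)] assms(2) by (simp add: k1_def)
  have "k1 \<noteq> j'" using assms(5) by (metis t(2) k1_def t_def transpose_eq_imp_eq)
  define p where "p = Transposition.transpose k1 k' \<circ> t"
  have "p permutes A"
    unfolding p_def using t(1) \<open>k1 \<in> A\<close> assms(4) by (intro permutes_compose permutes_swap_id)
  moreover have "p j = j'" "p k = k'"
    using t(2) \<open>k1 \<noteq> j'\<close> assms(6) by (simp_all add: p_def k1_def)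
  ultimately show ?thesis using sign_corr_permute by metis
qed

lemma sign_corr_row_sum:
  assumes "finite A"
  shows "(\<Sum>k\<in>A. sign_corr L A j k) = 0"
proof -
  have "(\<Sum>k\<in>A. sign_corr L A j k) = (\<Sum>(B, \<epsilon>)\<in>Omega L A. \<epsilon> j * (\<Sum>k\<in>A. \<epsilon> k))"
    unfolding sign_corr_def by (subst sum.swap) (simp add: case_prod_unfold sum_distrib_left)
  also have "\<dots> = 0"
  proof (intro sum.neutral ballI, clarify)
    fix B \<epsilon> assume x: "(B, \<epsilon>) \<in> Omega L A"
    note mem = Omega_memD[OF x]
    have "(\<Sum>k\<in>A. \<epsilon> k) = (\<Sum>k\<in>B. \<epsilon> k)"
      using mem(1,4) assms by (intro sum.mono_neutral_right) auto
    then show "\<epsilon> j * (\<Sum>k\<in>A. \<epsilon> k) = 0" using mem(5) by simp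
  qed
  finally show ?thesis .
qed

lemma sign_corr_trace:
  assumes "finite A"
  shows "(\<Sum>j\<in>A. sign_corr L A j j) = real L * real (card (Omega L A))"
proof -
  have "(\<Sum>j\<in>A. sign_corr L A j j) = (\<Sum>(B, \<epsilon>)\<in>Omega L A. \<Sum>j\<in>A. \<epsilon> j * \<epsilon> j)"
    unfolding sign_corr_def by (subst sum.swap) (simp add: case_prod_unfold)
  also have "\<dots> = (\<Sum>(B, \<epsilon>)\<in>Omega L A. real L)"
  proof (intro sum.cong refl, clarify)
    fix B \<epsilon> assume x: "(B, \<epsilon>) \<in> Omega L A"
    note mem = Omega_memD[OF x]
    have "\<epsilon> j * \<epsilon> j = (if j \<in> B then 1 else 0)" for j
      using mem(3)[of j] mem(4)[of j] by (cases "j \<in> B") auto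
    then show "(\<Sum>j\<in>A. \<epsilon> j * \<epsilon> j) = real L"
      using mem(1,2) assms by (simp add: sum.If_cases Int_absorb1)
  qed
  finally show ?thesis by simp
qed

lemma sign_corr_diag_offdiag:
  assumes A: "finite A" and jk: "j \<in> A" "k \<in> A" "j \<noteq> k"
  shows "sign_corr L A j j = - (real (card A) - 1) * sign_corr L A j k"
proof -
  have "0 = sign_corr L A j j + (\<Sum>k'\<in>A - {j}. sign_corr L A j k')"
    using sign_corr_row_sum[OF A, of L j] sum.remove[OF A jk(1), of "sign_corr L A j"]
    by linarith
  also have "(\<Sum>k'\<in>A - {j}. sign_corr L A j k') = (\<Sum>k'\<in>A - {j}. sign_corr L A j k)"
    using jk by (intro sum.cong refl sign_corr_offdiag_eq) auto
  also have "\<dots> = (real (card A) - 1) * sign_corr L A j k"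
  proof -
    have "0 < card A" using A jk(1) by (auto simp: card_gt_0_iff)
    then show ?thesis using jk(1) by simp
  qed
  finally show ?thesis by linarith
qed

lemma sign_corr_offdiag:
  assumes A: "finite A" and jk: "j \<in> A" "k \<in> A" "j \<noteq> k"
  shows "sign_corr L A j k
    = - real L * real (card (Omega L A)) / (real (card A) * (real (card A) - 1))"
proof -
  let ?w = "sign_corr L A j k" and ?N = "real (card A)"
  have "sign_corr L A i i = - (?N - 1) * ?w" if "i \<in> A" for i
  proof -
    define i' where "i' = (if i = j then k else j)"
    have i': "i' \<in> A" "i \<noteq> i'" using jk that by (auto simp: i'_def)
    have "sign_corr L A i i' = ?w" using sign_corr_offdiag_eq[OF that i'(1) jk(1,2) i'(2) jk(3)] .
    then show ?thesis using sign_corr_diag_offdiag[OF A that i'] by simp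
  qed
  then have "real L * real (card (Omega L A)) = ?N * (- (?N - 1) * ?w)"
    using sign_corr_trace[OF A, of L] by simp
  moreover have "2 \<le> card A"
    using card_mono[OF A, of "{j, k}"] jk by simp
  then have "?N * (?N - 1) \<noteq> 0" by simp
  ultimately show ?thesis by (simp add: field_simps)
qed

lemma sign_corr_diag:
  assumes A: "finite A" "2 \<le> card A" and j: "j \<in> A"
  shows "sign_corr L A j j = real L * real (card (Omega L A)) / real (card A)"
proof -
  have "card (A - {j}) \<noteq> 0" using A j by simp
  then obtain k where "k \<in> A - {j}" by (metis card.empty ex_in_conv)
  then have k: "k \<in> A" "k \<noteq> j" by auto
  let ?N = "real (card A)"
  have "?N \<noteq> 0" "?N - 1 \<noteq> 0" using A(2) by auto
  then have "- (?N - 1) * (- real L * real (card (Omega L A)) / (?N * (?N - 1)))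
      = real L * real (card (Omega L A)) / ?N"
    by (simp add: field_simps)
  then show ?thesis
    using sign_corr_diag_offdiag[OF A(1) j k(1)] sign_corr_offdiag[OF A(1) j k(1)] k(2) by simp
qed

lemma sum_Omega_quadratic_form:
  "(\<Sum>(B, \<epsilon>)\<in>Omega L A. \<Sum>j\<in>A. \<Sum>k\<in>A. \<epsilon> j * \<epsilon> k * a j k)
    = (\<Sum>j\<in>A. \<Sum>k\<in>A. sign_corr L A j k * a j k)"
  unfolding sign_corr_def
  by (simp add: case_prod_unfold sum.swap[of _ "Omega L A"] sum_distrib_right)

lemma average_Omega_quadratic_form:
  fixes a :: "nat \<Rightarrow> nat \<Rightarrow> real"
  assumes A: "finite A" "2 \<le> card A" and L: "even L" "L \<le> card A"
  shows "(1 / real (card (Omega L A))) * (\<Sum>(B, \<epsilon>)\<in>Omega L A. \<Sum>j\<in>A. \<Sum>k\<in>A. \<epsilon> j * \<epsilon> k * a j k)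
    = real L / real (card A) * (\<Sum>j\<in>A. a j j)
      - real L / (real (card A) * (real (card A) - 1)) * (\<Sum>j\<in>A. \<Sum>k\<in>A - {j}. a j k)"
proof -
  let ?M = "real (card (Omega L A))" and ?N = "real (card A)"
  have "?M \<noteq> 0"
    using Omega_nonempty[OF A(1) L] Omega_finite[OF A(1)] by simp
  have row: "(\<Sum>k\<in>A. sign_corr L A j k * a j k)
      = ?M * (real L / ?N * a j j - real L / (?N * (?N - 1)) * (\<Sum>k\<in>A - {j}. a j k))"
    if j: "j \<in> A" for j
  proof -
    have "(\<Sum>k\<in>A - {j}. sign_corr L A j k * a j k)
        = (\<Sum>k\<in>A - {j}. (- real L * ?M / (?N * (?N - 1))) * a j k)"
      using sign_corr_offdiag[OF A(1) j] by (intro sum.cong) auto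
    also have "\<dots> = - real L * ?M / (?N * (?N - 1)) * (\<Sum>k\<in>A - {j}. a j k)"
      by (rule sum_distrib_left[symmetric])
    finally show ?thesis
      using sum.remove[OF A(1) j, of "\<lambda>k. sign_corr L A j k * a j k"] sign_corr_diag[OF A j]
      by (simp add: algebra_simps)
  qed
  show ?thesis
    unfolding sum_Omega_quadratic_form using \<open>?M \<noteq> 0\<close>
    by (simp add: row sum_distrib_left sum_subtractf)
qed

lemma bvec_eq_sum:
  assumes "finite A" "B \<subseteq> A" "\<And>k. k \<notin> B \<Longrightarrow> \<epsilon> k = 0"
  shows "bvec e B \<epsilon> = (\<Sum>k\<in>A. \<epsilon> k *\<^sub>R e k)"
  unfolding bvec_def using assms by (intro sum.mono_neutral_left) auto

lemma bilinear_linear_sum_scaleR: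
  assumes "bilinear pair" "linear T" "finite A"
  shows "pair (T (\<Sum>j\<in>A. c j *\<^sub>R x j)) (\<Sum>k\<in>A. c k *\<^sub>R y k)
    = (\<Sum>j\<in>A. \<Sum>k\<in>A. c j * c k * pair (T (x j)) (y k))"
  using assms
  by (simp add: linear_sum linear_scale bilinear_sum sum.cartesian_product
      bilinear_lmul bilinear_rmul mult_ac)

lemma norm_apply_le_onorm:
  assumes T: "bounded_linear T" and "norm x \<le> a"
  shows "norm (T x) \<le> onorm T * a"
  using onorm[OF T, of x] mult_left_mono[OF assms(2) onorm_pos_le[OF T]] by linarith

definition max_norm_sum_but_one :: "(nat \<Rightarrow> 'a::real_normed_vector) \<Rightarrow> nat set \<Rightarrow> real" where
  "max_norm_sum_but_one e A = Max ((\<lambda>l. norm (\<Sum>k\<in>A - {l}. e k)) ` A)"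

lemma norm_sum_but_one_le_Max:
  "finite A \<Longrightarrow> l \<in> A \<Longrightarrow> norm (\<Sum>k\<in>A - {l}. e k) \<le> max_norm_sum_but_one e A"
  unfolding max_norm_sum_but_one_def by (intro Max_ge) auto

lemma nu_ge_max_norm_sum_but_one:
  "finite A \<Longrightarrow> ereal (min (max_norm_sum_but_one e A) (max_norm_sum_but_one f A)) \<le> nu e f (card A)"
  unfolding nu_def max_norm_sum_but_one_def by (intro SUP_upper) auto

context
  fixes pair :: "'x::real_normed_vector \<Rightarrow> 'y::real_normed_vector \<Rightarrow> real" and Cd :: real
  assumes bil: "bilinear pair"
    and pair_bound: "\<And>x y. \<bar>pair x y\<bar> \<le> Cd * norm x * norm y"
    and Cd_nonneg: "0 \<le> Cd"
begin

lemma abs_pair_le: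
  assumes "norm x \<le> a" "norm y \<le> b"
  shows "\<bar>pair x y\<bar> \<le> Cd * a * b"
proof -
  have "0 \<le> a" using assms(1) norm_ge_zero order_trans by blast
  have "Cd * norm x \<le> Cd * a" using assms(1) Cd_nonneg by (rule mult_left_mono)
  then have "Cd * norm x * norm y \<le> Cd * a * b"
    by (rule mult_mono[OF _ assms(2)]) (simp_all add: \<open>0 \<le> a\<close> Cd_nonneg)
  then show ?thesis using pair_bound order_trans by blast
qed

lemma offdiag_sum_le_but_one_f:
  assumes T: "bounded_linear T" and e: "\<And>j. norm (e j) \<le> 1" and A: "finite A"
  shows "(\<Sum>j\<in>A. \<Sum>k\<in>A - {j}. pair (T (e j)) (f k))
    \<le> real (card A) * (Cd * onorm T * max_norm_sum_but_one f A)"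
proof -
  have "pair (T (e j)) (\<Sum>k\<in>A - {j}. f k) \<le> Cd * onorm T * max_norm_sum_but_one f A"
    if "j \<in> A" for j
    using abs_pair_le[OF norm_apply_le_onorm[OF T e[of j]] norm_sum_but_one_le_Max[OF A that]]
    unfolding mult_1_right by (rule abs_le_D1)
  then have "(\<Sum>j\<in>A. pair (T (e j)) (\<Sum>k\<in>A - {j}. f k))
      \<le> real (card A) * (Cd * onorm T * max_norm_sum_but_one f A)"
    by (rule sum_bounded_above)
  moreover have "linear (pair x)" for x using bil by (simp add: bilinear_def)
  ultimately show ?thesis by (simp add: linear_sum)
qed

lemma offdiag_sum_le_but_one_e:
  assumes T: "bounded_linear T" and f: "\<And>k. norm (f k) \<le> 1" and A: "finite A"
  shows "(\<Sum>j\<in>A. \<Sum>k\<in>A - {j}. pair (T (e j)) (f k))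
    \<le> real (card A) * (Cd * onorm T * max_norm_sum_but_one e A)"
proof -
  have "pair (T (\<Sum>j\<in>A - {k}. e j)) (f k) \<le> Cd * onorm T * max_norm_sum_but_one e A"
    if "k \<in> A" for k
    using abs_pair_le[OF norm_apply_le_onorm[OF T norm_sum_but_one_le_Max[OF A that]] f[of k]]
    unfolding mult_1_right mult.assoc by (rule abs_le_D1)
  then have "(\<Sum>k\<in>A. pair (T (\<Sum>j\<in>A - {k}. e j)) (f k))
      \<le> real (card A) * (Cd * onorm T * max_norm_sum_but_one e A)"
    by (rule sum_bounded_above)
  moreover have "(\<Sum>j\<in>A. \<Sum>k\<in>A - {j}. pair (T (e j)) (f k))
      = (\<Sum>k\<in>A. \<Sum>j\<in>A - {k}. pair (T (e j)) (f k))"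
    using sum.swap_restrict[OF A A, of "\<lambda>j k. pair (T (e j)) (f k)" "\<lambda>j k. j \<noteq> k"]
    by (simp add: set_diff_eq eq_commute)
  moreover have "pair (T (\<Sum>j\<in>A - {k}. e j)) (f k) = (\<Sum>j\<in>A - {k}. pair (T (e j)) (f k))" for k
  proof -
    have "linear (\<lambda>x. pair x (f k))" using bil by (simp add: bilinear_def)
    from linear_sum[OF this] show ?thesis
      by (simp add: linear_sum[OF bounded_linear.linear[OF T]])
  qed
  ultimately show ?thesis by simp
qed

lemma average_pair_bvec_ge:
  assumes T: "bounded_linear T" and e: "\<And>j. norm (e j) \<le> 1" and f: "\<And>k. norm (f k) \<le> 1"
    and A: "finite A" "2 \<le> card A" and L: "even L" "L \<le> card A"
    and diag: "\<And>j. j \<in> A \<Longrightarrow> \<delta> \<le> pair (T (e j)) (f j)"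
  shows "(\<delta> - Cd * onorm T / (real (card A) - 1)
            * min (max_norm_sum_but_one e A) (max_norm_sum_but_one f A)) * real L
    \<le> (1 / real (card (Omega L A))) * (\<Sum>(B, \<epsilon>)\<in>Omega L A. pair (T (bvec e B \<epsilon>)) (bvec f B \<epsilon>))"
proof -
  let ?N = "real (card A)" and ?C = "Cd * onorm T"
    and ?m = "min (max_norm_sum_but_one e A) (max_norm_sum_but_one f A)"
  define Diag where "Diag = (\<Sum>j\<in>A. pair (T (e j)) (f j))"
  define Offdiag where "Offdiag = (\<Sum>j\<in>A. \<Sum>k\<in>A - {j}. pair (T (e j)) (f k))"
  have expand: "(\<Sum>(B, \<epsilon>)\<in>Omega L A. pair (T (bvec e B \<epsilon>)) (bvec f B \<epsilon>))
      = (\<Sum>(B, \<epsilon>)\<in>Omega L A. \<Sum>j\<in>A. \<Sum>k\<in>A. \<epsilon> j * \<epsilon> k * pair (T (e j)) (f k))"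
  proof (intro sum.cong refl, clarify)
    fix B \<epsilon> assume "(B, \<epsilon>) \<in> Omega L A"
    note mem = Omega_memD[OF this]
    show "pair (T (bvec e B \<epsilon>)) (bvec f B \<epsilon>)
        = (\<Sum>j\<in>A. \<Sum>k\<in>A. \<epsilon> j * \<epsilon> k * pair (T (e j)) (f k))"
      using bilinear_linear_sum_scaleR[OF bil bounded_linear.linear[OF T] A(1)]
      by (simp add: bvec_eq_sum[OF A(1) mem(1,4)])
  qed
  have avg: "(1 / real (card (Omega L A)))
        * (\<Sum>(B, \<epsilon>)\<in>Omega L A. pair (T (bvec e B \<epsilon>)) (bvec f B \<epsilon>))
      = real L / ?N * Diag - real L / (?N * (?N - 1)) * Offdiag"
    unfolding expand Diag_def Offdiag_def by (rule average_Omega_quadratic_form[OF A L])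
  have "?N * \<delta> \<le> Diag"
    unfolding Diag_def using sum_mono[of A "\<lambda>_. \<delta>", OF diag] by simp
  then have "real L / ?N * (?N * \<delta>) \<le> real L / ?N * Diag"
    by (intro mult_left_mono) auto
  have "0 \<le> ?C" using Cd_nonneg onorm_pos_le[OF T] by simp
  then have "Offdiag \<le> ?N * (?C * ?m)"
    using offdiag_sum_le_but_one_e[OF T f A(1)] offdiag_sum_le_but_one_f[OF T e A(1)]
    unfolding Offdiag_def by (simp add: min_def)
  then have "real L / (?N * (?N - 1)) * Offdiag \<le> real L / (?N * (?N - 1)) * (?N * (?C * ?m))"
    using A(2) by (intro mult_left_mono) auto
  moreover have "real L / ?N * (?N * \<delta>) - real L / (?N * (?N - 1)) * (?N * (?C * ?m))
      = (\<delta> - ?C / (?N - 1) * ?m) * real L"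
    using A(2) by (simp add: field_simps)
  ultimately show ?thesis
    using avg \<open>real L / ?N * (?N * \<delta>) \<le> real L / ?N * Diag\<close> by linarith
qed

end

theorem lemma3p2:
  fixes pair :: "'x::banach \<Rightarrow> 'y::banach \<Rightarrow> real"
    and e :: "nat \<Rightarrow> 'x" and f :: "nat \<Rightarrow> 'y"
    and Cd :: real and T :: "'x \<Rightarrow> 'x"
    and L N :: nat and A :: "nat set"
  assumes bil: "bilinear pair"
    and B1: "\<And>x. (\<forall>y. pair x y = 0) \<Longrightarrow> x = 0"
    and B2: "\<And>y. (\<forall>x. pair x y = 0) \<Longrightarrow> y = 0"
    and Cd_pos: "Cd > 0"
    and B3: "\<And>x y. \<bar>pair x y\<bar> \<le> Cd * norm x * norm y"
    and B4: "\<And>j k. pair (e j) (f k) = (if j = k then 1 else 0)"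
    and B5_conv: "\<And>x y. (\<lambda>n. \<Sum>j<n. pair x (f j) * pair (e j) y) \<longlonglongrightarrow> pair x y"
    and B5_uniq: "\<And>x a. (\<forall>y. (\<lambda>n. \<Sum>j<n. a j * pair (e j) y) \<longlonglongrightarrow> pair x y)
                    \<Longrightarrow> a = (\<lambda>j. pair x (f j))"
    and e_norm: "\<And>j. norm (e j) = 1"
    and f_norm: "\<And>j. norm (f j) = 1"
    and T_lin: "bounded_linear T"
    and delta_pos: "(INF j. pair (T (e j)) (f j)) > 0"
    and L_even: "even L" and L_pos: "L > 0"
    and NL: "N \<ge> L"
    and A_fin: "finite A" and A_card: "card A = N"
  shows "ereal ((1 / real (card (Omega L A))) *
           (\<Sum>(B, \<epsilon>)\<in>Omega L A. pair (T (bvec e B \<epsilon>)) (bvec f B \<epsilon>)))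
         \<ge> (ereal (INF j. pair (T (e j)) (f j))
             - ereal (Cd * onorm T / (real N - 1)) * nu e f N) * ereal (real L)"
proof -
  let ?\<delta> = "INF j. pair (T (e j)) (f j)"
  let ?c = "Cd * onorm T / (real N - 1)"
  let ?m = "min (max_norm_sum_but_one e A) (max_norm_sum_but_one f A)"
  let ?avg = "(1 / real (card (Omega L A)))
    * (\<Sum>(B, \<epsilon>)\<in>Omega L A. pair (T (bvec e B \<epsilon>)) (bvec f B \<epsilon>))"
  have Cd_nonneg: "0 \<le> Cd" using Cd_pos by simp
  have "2 \<le> N" using L_even L_pos NL by presburger
  have "\<bar>pair (T (e j)) (f j)\<bar> \<le> Cd * (onorm T * 1) * 1" for j
    using e_norm f_norm
    by (intro abs_pair_le[OF bil B3 Cd_nonneg] norm_apply_le_onorm[OF T_lin]) auto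
  then have "- (Cd * onorm T) \<le> pair (T (e j)) (f j)" for j
    unfolding mult_1_right abs_le_iff by (simp add: minus_le_iff)
  then have "bdd_below (range (\<lambda>j. pair (T (e j)) (f j)))" by (rule bdd_belowI2)
  then have "?\<delta> \<le> pair (T (e j)) (f j)" for j by (rule cINF_lower) simp
  then have "(?\<delta> - ?c * ?m) * real L \<le> ?avg"
    using average_pair_bvec_ge[OF bil B3 Cd_nonneg T_lin, where e = e and f = f and A = A]
      e_norm f_norm A_fin A_card \<open>2 \<le> N\<close> L_even NL by simp
  have "ereal ?m \<le> nu e f N" using nu_ge_max_norm_sum_but_one[OF A_fin] A_card by simp
  moreover have "0 \<le> ?c" using Cd_nonneg onorm_pos_le[OF T_lin] \<open>2 \<le> N\<close> by simp
  ultimately have "(ereal ?\<delta> - ereal ?c * nu e f N) * ereal (real L)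
      \<le> (ereal ?\<delta> - ereal ?c * ereal ?m) * ereal (real L)"
    by (intro ereal_mult_right_mono ereal_minus_mono ereal_mult_left_mono) auto
  also have "\<dots> = ereal ((?\<delta> - ?c * ?m) * real L)" by (simp del: ereal_min)
  also have "\<dots> \<le> ereal ?avg" using \<open>(?\<delta> - ?c * ?m) * real L \<le> ?avg\<close> by simp
  finally show ?thesis .
qed

end
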